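(* Let $(I,\leq)$ be a finite poset containing two incomparable elements. Then the collection of nonzero functors in $\mathcal C=\{\mathrm{coker}(G\subseteq F)\mid G\subseteq F\subseteq K_I\}$ is not independent, and the functor $\mathcal Q\colon\Omega^{\mathrm{op}}\to\mathrm{Fun}(I,\mathrm{vect}_K)$ is not thin.
   Context: $K$ is a field, $\mathrm{vect}_K$ finite-dimensional $K$-vector spaces, $K_I$ the constant functor with value $K$; subfunctors of $K_I$ are identified with their supports $\mathrm{supp}(F)=\{v\mid F(v)\neq0\}$, which are upsets. $\mathrm{Sub}(I)$ is the set of subfunctors of $K_I$ ordered by $F\preccurlyeq G$ iff $\mathrm{supp}(F)\supseteq\mathrm{supp}(G)$. $\Omega:=\{(F,G)\in\mathrm{Sub}(I)^2\mid F\preccurlyeq G\}$ with the product order, and $\mathcal Q\colon\Omega^{\mathrm{op}}\to\mathrm{Fun}(I,\mathrm{vect}_K)$ sends $(F,G)$ to $\mathrm{coker}(G\subseteq F)$, and a relation $(F,G)\preccurlyeq(F',G')$ to the natural transformation $\mathrm{coker}(G'\subseteq F')\to\mathrm{coker}(G\subseteq F)$ induced by the inclusions $F'\subseteq F$, $G'\subseteq G$. A collection $\mathcal C'$ of objects is independent if for every finite direct sum $X$ of elements of $\mathcal C'$ there is a unique finitely supported $\beta\colon\mathcal C'\to\mathbb N$ with $X\cong\bigoplus_{A\in\mathcal C'}A^{\beta(A)}$. For a finite poset $J$ and $\mathcal P\colon J^{\mathrm{op}}\to\mathrm{Fun}(I,\mathrm{vect}_K)$: $K(a,-)\colon J\to\mathrm{vect}_K$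 is the free functor ($K$ at $b\succcurlyeq a$, else $0$); $\mathcal RM=\mathrm{Nat}_I(\mathcal P(-),M)$ with left adjoint $\mathcal L$ (so $\mathcal LK(a,-)\cong\mathcal P(a)$); $\eta_a\colon K(a,-)\to\mathcal R\mathcal LK(a,-)$ is the unit; $\mathcal P$ is thin if every $\eta_a$ is pointwise surjective. *)

theory Defs
  imports "Jordan_Normal_Form.Matrix"
begin

text \<open>A functor I -> vect_K (I a finite poset, K a field) is represented concretely:
  each finite-dimensional vector space M(v) is K^(d v), and each structure map
  M(v <= w) is a (d w) x (d v) matrix.\<close>

type_synonym ('i,'k) rep = "('i \<Rightarrow> nat) \<times> ('i \<Rightarrow> 'i \<Rightarrow> 'k mat)"

definition rdim :: "('i,'k) rep \<Rightarrow> 'i \<Rightarrow> nat" where "rdim M = fst M"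
definition rmap :: "('i,'k) rep \<Rightarrow> 'i \<Rightarrow> 'i \<Rightarrow> 'k mat" where "rmap M = snd M"

definition is_rep :: "('i::order,'k::field) rep \<Rightarrow> bool" where
  "is_rep M \<longleftrightarrow>
     (\<forall>v w. v \<le> w \<longrightarrow> rmap M v w \<in> carrier_mat (rdim M w) (rdim M v)) \<and>
     (\<forall>v. rmap M v v = 1\<^sub>m (rdim M v)) \<and>
     (\<forall>u v w. u \<le> v \<longrightarrow> v \<le> w \<longrightarrow> rmap M u w = rmap M v w * rmap M u v)"

definition nat_trans :: "('i::order,'k::field) rep \<Rightarrow> ('i,'k) rep \<Rightarrow> ('i \<Rightarrow> 'k mat) \<Rightarrow> bool" where
  "nat_trans M N \<phi> \<longleftrightarrow>
     (\<forall>v. \<phi> v \<in> carrier_mat (rdim N v) (rdim M v)) \<and>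
     (\<forall>v w. v \<le> w \<longrightarrow> \<phi> w * rmap M v w = rmap N v w * \<phi> v)"

definition rep_iso :: "('i::order,'k::field) rep \<Rightarrow> ('i,'k) rep \<Rightarrow> bool" where
  "rep_iso M N \<longleftrightarrow> (\<exists>\<phi>. nat_trans M N \<phi> \<and> (\<forall>v. invertible_mat (\<phi> v)))"

definition zero_rep :: "('i,'k::field) rep" where
  "zero_rep = (\<lambda>v. 0, \<lambda>v w. 0\<^sub>m 0 0)"

definition is_zero_rep :: "('i,'k) rep \<Rightarrow> bool" where
  "is_zero_rep M \<longleftrightarrow> (\<forall>v. rdim M v = 0)"

definition dsum :: "('i,'k::field) rep \<Rightarrow> ('i,'k) rep \<Rightarrow> ('i,'k) rep" where
  "dsum M N = (\<lambda>v. rdim M v + rdim N v,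
     \<lambda>v w. four_block_mat (rmap M v w) (0\<^sub>m (rdim M w) (rdim N v))
                          (0\<^sub>m (rdim N w) (rdim M v)) (rmap N v w))"

definition dsum_list :: "('i,'k::field) rep list \<Rightarrow> ('i,'k) rep" where
  "dsum_list xs = foldr dsum xs zero_rep"

definition dsum_mset :: "('i,'k::field) rep multiset \<Rightarrow> ('i,'k) rep" where
  "dsum_mset \<beta> = dsum_list (SOME ys. mset ys = \<beta>)"

text \<open>Independence of a collection C of objects: every finite direct sum of members of C
  is isomorphic to a direct sum with a unique finitely supported multiplicity
  function beta : C -> nat (encoded as a multiset supported in C).\<close>
definition indep_collection :: "('i::order,'k::field) rep set \<Rightarrow> bool" where
  "indep_collection C \<longleftrightarrow>
     (\<forall>xs. set xs \<subseteq> C \<longrightarrow>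
        (\<exists>!\<beta>. set_mset \<beta> \<subseteq> C \<and> rep_iso (dsum_list xs) (dsum_mset \<beta>)))"

text \<open>Subfunctors of K_I, identified with their supports: the upsets of I.\<close>
definition upset :: "'i::order set \<Rightarrow> bool" where
  "upset S \<longleftrightarrow> (\<forall>x\<in>S. \<forall>y. x \<le> y \<longrightarrow> y \<in> S)"

text \<open>coker(G \<subseteq> F) for subfunctors G \<subseteq> F of K_I: K on F - G, 0 elsewhere,
  structure maps induced by the identity of K.\<close>
definition coker_rep :: "'i set \<Rightarrow> 'i set \<Rightarrow> ('i,'k::field) rep" where
  "coker_rep F G =
     (\<lambda>v. if v \<in> F - G then 1 else 0,
      \<lambda>v w. mat (if w \<in> F - G then 1 else 0) (if v \<in> F - G then 1 else 0) (\<lambda>_. 1))"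

definition coker_collection :: "('i::order,'k::field) rep set" where
  "coker_collection = {coker_rep F G | F G. upset F \<and> upset G \<and> G \<subseteq> F}"

text \<open>Omega = {(F,G) in Sub(I)^2 | F \<preccurlyeq> G}, where F \<preccurlyeq> G iff supp F \<supseteq> supp G.\<close>
definition Omega :: "('i::order set \<times> 'i set) set" where
  "Omega = {(F,G). upset F \<and> upset G \<and> G \<subseteq> F}"

definition Omega_le :: "('i set \<times> 'i set) \<Rightarrow> ('i set \<times> 'i set) \<Rightarrow> bool" where
  "Omega_le a b \<longleftrightarrow> fst b \<subseteq> fst a \<and> snd b \<subseteq> snd a"

text \<open>Q on objects, and on a relation a \<preccurlyeq> b the natural transformation Q(b) -> Q(a)
  induced by the inclusions.\<close>
definition Qobj :: "('i set \<times> 'i set) \<Rightarrow> ('i,'k::field) rep" where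
  "Qobj a = coker_rep (fst a) (snd a)"

definition Qmor :: "('i set \<times> 'i set) \<Rightarrow> ('i set \<times> 'i set) \<Rightarrow> 'i \<Rightarrow> 'k::field mat" where
  "Qmor a b = (\<lambda>v. mat (rdim (Qobj a :: ('i,'k) rep) v) (rdim (Qobj b :: ('i,'k) rep) v) (\<lambda>_. 1))"

text \<open>Thinness of P : J^op -> Fun(I, vect_K) (J finite poset given by carrier and order,
  Pmor a b : P(b) -> P(a) for a \<le> b).  With L K(a,-) \<cong> P(a), the unit
  eta_a at b is the map K(a,b) -> Nat(P(b),P(a)) sending 1 to P(a \<le> b) when a \<le> b,
  and the zero map 0 -> Nat(P(b),P(a)) otherwise.  Pointwise surjectivity of all eta_a
  is therefore the following condition.\<close>
definition thin :: "'j set \<Rightarrow> ('j \<Rightarrow> 'j \<Rightarrow> bool) \<Rightarrow> ('j \<Rightarrow> ('i::order,'k::field) rep)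
                     \<Rightarrow> ('j \<Rightarrow> 'j \<Rightarrow> 'i \<Rightarrow> 'k mat) \<Rightarrow> bool" where
  "thin J jle P Pmor \<longleftrightarrow>
     (\<forall>a\<in>J. \<forall>b\<in>J. \<forall>\<phi>. nat_trans (P b) (P a) \<phi> \<longrightarrow>
        (if jle a b then (\<exists>c. \<forall>v. \<phi> v = c \<cdot>\<^sub>m Pmor a b v)
         else (\<forall>v. \<phi> v = 0\<^sub>m (rdim (P a) v) (rdim (P b) v))))"

end

theory Submission
  imports Defs
begin

text \<open>For incomparable x and y, the cokernel C of the inclusion of the strict upsets of x and y
  into their closed upsets is K at x and y and zero elsewhere. As its support {x, y} is an
  antichain, every family of matrices of the right shapes is a natural transformation out of C.
  The identities show C \<cong> S_x \<oplus> S_y for the simple functors S_x and S_y, which are cokernels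
  too, so C is a direct sum of members of the collection in two ways. The projection onto the
  x-component is an endomorphism of C = Q(F,G) that is not a scalar multiple of the identity
  Q((F,G) \<preccurlyeq> (F,G)), so Q is not thin.\<close>

definition is_prerep :: "('i::order,'k::field) rep \<Rightarrow> bool" where
  "is_prerep M \<longleftrightarrow> (\<forall>v w. v \<le> w \<longrightarrow> rmap M v w \<in> carrier_mat (rdim M w) (rdim M v)) \<and>
     (\<forall>v. rmap M v v = 1\<^sub>m (rdim M v))"

definition antichain_support :: "('i::order,'k) rep \<Rightarrow> bool" where
  "antichain_support M \<longleftrightarrow> (\<forall>v w. v < w \<longrightarrow> rdim M v = 0 \<or> rdim M w = 0)"

lemma is_prerep_zero_rep: "is_prerep (zero_rep :: ('i::order,'k::field) rep)"
  unfolding is_prerep_def zero_rep_def rdim_def rmap_def by auto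

lemma is_prerep_dsum: "is_prerep M \<Longrightarrow> is_prerep N \<Longrightarrow> is_prerep (dsum M N)"
  unfolding is_prerep_def dsum_def by (auto simp: rdim_def rmap_def)

lemma is_prerep_dsum_list: "(\<And>A. A \<in> set xs \<Longrightarrow> is_prerep A) \<Longrightarrow> is_prerep (dsum_list xs)"
  unfolding dsum_list_def by (induction xs) (auto simp: is_prerep_zero_rep is_prerep_dsum)

lemma rdim_dsum_list: "rdim (dsum_list xs) v = (\<Sum>A\<leftarrow>xs. rdim A v)"
  unfolding dsum_list_def by (induction xs) (auto simp: dsum_def zero_rep_def rdim_def)

lemma mset_dsum_mset_summands: "mset (SOME ys. mset ys = \<beta>) = \<beta>"
  by (rule someI_ex) (rule ex_mset)

lemma is_prerep_dsum_mset:
  "(\<And>A. A \<in># \<beta> \<Longrightarrow> is_prerep A) \<Longrightarrow> is_prerep (dsum_mset \<beta>)"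
  unfolding dsum_mset_def
  by (rule is_prerep_dsum_list) (metis mset_dsum_mset_summands set_mset_mset)

lemma rdim_dsum_mset: "rdim (dsum_mset \<beta>) v = (\<Sum>A\<in>#\<beta>. rdim A v)"
proof -
  have "(\<Sum>A\<in>#\<beta>. rdim A v) = sum_mset (mset (map (\<lambda>A. rdim A v) (SOME ys. mset ys = \<beta>)))"
    by (simp only: mset_map mset_dsum_mset_summands)
  then show ?thesis
    unfolding dsum_mset_def rdim_dsum_list sum_mset_sum_list by simp
qed

text \<open>Between distinct points of an antichain support both sides of a naturality square
  are matrices with zero rows or zero columns, so any pointwise family of matrices is natural.\<close>
lemma nat_trans_antichain_support:
  assumes "is_prerep M" and "is_prerep N" and dims: "\<And>v. rdim M v = rdim N v"
    and "antichain_support M"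
    and shape: "\<And>v. \<phi> v \<in> carrier_mat (rdim N v) (rdim M v)"
  shows "nat_trans M N \<phi>"
  unfolding nat_trans_def
proof (intro conjI allI impI)
  fix v w :: 'a assume "v \<le> w"
  have M: "rmap M v w \<in> carrier_mat (rdim M w) (rdim M v)"
    and N: "rmap N v w \<in> carrier_mat (rdim N w) (rdim N v)"
    using \<open>is_prerep M\<close> \<open>is_prerep N\<close> \<open>v \<le> w\<close> unfolding is_prerep_def by blast+
  show "\<phi> w * rmap M v w = rmap N v w * \<phi> v"
  proof (cases "v = w")
    case True
    have "rmap M v v = 1\<^sub>m (rdim M v)" and "rmap N v v = 1\<^sub>m (rdim N v)"
      using \<open>is_prerep M\<close> \<open>is_prerep N\<close> unfolding is_prerep_def by blast+
    with True show ?thesis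
      using right_mult_one_mat[OF shape[of v]] left_mult_one_mat[OF shape[of v]] by simp
  next
    case False
    with \<open>v \<le> w\<close> have "v < w" by simp
    with \<open>antichain_support M\<close> have empty: "rdim M v = 0 \<or> rdim N w = 0"
      using dims[of w] unfolding antichain_support_def by metis
    have L: "\<phi> w * rmap M v w \<in> carrier_mat (rdim N w) (rdim M v)"
      using M shape[of w] dims[of w] by simp
    have R: "rmap N v w * \<phi> v \<in> carrier_mat (rdim N w) (rdim M v)"
      using N shape[of v] by simp
    show ?thesis
    proof (rule eq_matI)
      fix i j assume "i < dim_row (rmap N v w * \<phi> v)" and "j < dim_col (rmap N v w * \<phi> v)"
      with carrier_matD[OF R] empty have False by auto
      then show "(\<phi> w * rmap M v w) $$ (i, j) = (rmap N v w * \<phi> v) $$ (i, j)" ..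
    next
      show "dim_row (\<phi> w * rmap M v w) = dim_row (rmap N v w * \<phi> v)"
        using carrier_matD(1)[OF L] carrier_matD(1)[OF R] by (rule trans[OF _ sym])
      show "dim_col (\<phi> w * rmap M v w) = dim_col (rmap N v w * \<phi> v)"
        using carrier_matD(2)[OF L] carrier_matD(2)[OF R] by (rule trans[OF _ sym])
    qed
  qed
qed (fact shape)

lemma invertible_one_mat: "invertible_mat (1\<^sub>m n :: 'k::semiring_1 mat)"
proof -
  have "inverts_mat (1\<^sub>m n) (1\<^sub>m n :: 'k mat)"
    unfolding inverts_mat_def using left_mult_one_mat[OF one_carrier_mat[of n]] by simp
  then show ?thesis
    unfolding invertible_mat_def by auto
qed

lemma rep_iso_antichain_support:
  assumes "is_prerep M" and "is_prerep N" and "\<And>v. rdim M v = rdim N v"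
    and "antichain_support M"
  shows "rep_iso M N"
proof -
  have "nat_trans M N (\<lambda>v. 1\<^sub>m (rdim M v))"
    using assms by (intro nat_trans_antichain_support) auto
  then show ?thesis
    unfolding rep_iso_def using invertible_one_mat by blast
qed

lemma rdim_coker_rep: "rdim (coker_rep F G :: ('i,'k::field) rep) v = (if v \<in> F - G then 1 else 0)"
  unfolding rdim_def coker_rep_def by simp

lemma is_prerep_coker_rep: "is_prerep (coker_rep F G :: ('i::order,'k::field) rep)"
  unfolding is_prerep_def coker_rep_def rdim_def rmap_def by auto

lemma upset_atLeast: "upset {x..}"
  unfolding upset_def by auto

lemma upset_greaterThan: "upset {x<..}"
  unfolding upset_def by auto

lemma upset_Un: "upset F \<Longrightarrow> upset G \<Longrightarrow> upset (F \<union> G)"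
  unfolding upset_def by blast

lemma coker_rep_in_nonzero_cokers:
  assumes "upset F" and "upset G" and "G \<subseteq> F" and "v \<in> F - G"
  shows "coker_rep F G \<in> {A \<in> (coker_collection :: ('i::order,'k::field) rep set). \<not> is_zero_rep A}"
proof -
  have "coker_rep F G \<in> (coker_collection :: ('i,'k) rep set)"
    using assms(1-3) unfolding coker_collection_def by blast
  moreover have "rdim (coker_rep F G :: ('i,'k) rep) v \<noteq> 0"
    using assms(4) unfolding rdim_coker_rep by simp
  ultimately show ?thesis
    unfolding is_zero_rep_def by auto
qed

definition simple_rep :: "'i::order \<Rightarrow> ('i,'k::field) rep" where
  "simple_rep x = coker_rep {x..} {x<..}"

definition pair_rep :: "'i::order \<Rightarrow> 'i \<Rightarrow> ('i,'k::field) rep" where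
  "pair_rep x y = coker_rep ({x..} \<union> {y..}) ({x<..} \<union> {y<..})"

lemma is_prerep_simple_rep: "is_prerep (simple_rep x)"
  unfolding simple_rep_def by (rule is_prerep_coker_rep)

lemma is_prerep_pair_rep: "is_prerep (pair_rep x y)"
  unfolding pair_rep_def by (rule is_prerep_coker_rep)

lemma rdim_simple_rep: "rdim (simple_rep x) v = (if v = x then 1 else 0)"
  unfolding simple_rep_def rdim_coker_rep by auto

lemma atLeast_Un_diff_greaterThan_Un:
  fixes x y :: "'i::order"
  assumes "\<not> x \<le> y" and "\<not> y \<le> x"
  shows "({x..} \<union> {y..}) - ({x<..} \<union> {y<..}) = {x, y}"
  using assms by (auto simp: less_le)

lemma rdim_pair_rep:
  fixes x y :: "'i::order"
  assumes "\<not> x \<le> y" and "\<not> y \<le> x"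
  shows "rdim (pair_rep x y) v = (if v = x \<or> v = y then 1 else 0)"
  unfolding pair_rep_def rdim_coker_rep atLeast_Un_diff_greaterThan_Un[OF assms] by auto

lemma antichain_support_pair_rep:
  fixes x y :: "'i::order"
  assumes "\<not> x \<le> y" and "\<not> y \<le> x"
  shows "antichain_support (pair_rep x y)"
  unfolding antichain_support_def
proof (intro allI impI)
  fix v w :: 'i assume "v < w"
  show "rdim (pair_rep x y) v = 0 \<or> rdim (pair_rep x y) w = 0"
  proof (rule ccontr)
    assume "\<not> (rdim (pair_rep x y) v = 0 \<or> rdim (pair_rep x y) w = 0)"
    then have "v = x \<or> v = y" and "w = x \<or> w = y"
      unfolding rdim_pair_rep[OF assms] by (simp_all split: if_splits)
    with \<open>v < w\<close> assms show False
      by (metis less_imp_le less_irrefl)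
  qed
qed

lemma rep_iso_dsum_pair_rep:
  fixes x y :: "'i::order" and \<beta> :: "('i,'k::field) rep multiset"
  assumes "\<not> x \<le> y" and "\<not> y \<le> x"
    and "\<And>A. A \<in># \<beta> \<Longrightarrow> is_prerep A"
    and "\<And>v. (\<Sum>A\<in>#\<beta>. rdim A v) = rdim (pair_rep x y :: ('i,'k) rep) v"
  shows "rep_iso (dsum_list [pair_rep x y]) (dsum_mset \<beta>)"
proof (rule rep_iso_antichain_support)
  show "is_prerep (dsum_list [pair_rep x y])"
    by (rule is_prerep_dsum_list) (simp add: is_prerep_pair_rep)
  show "is_prerep (dsum_mset \<beta>)"
    using assms(3) by (rule is_prerep_dsum_mset)
  show "rdim (dsum_list [pair_rep x y :: ('i,'k) rep]) v = rdim (dsum_mset \<beta>) v" for v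
    unfolding rdim_dsum_list rdim_dsum_mset assms(4) by simp
  show "antichain_support (dsum_list [pair_rep x y :: ('i,'k) rep])"
    using antichain_support_pair_rep[OF assms(1,2)]
    unfolding antichain_support_def rdim_dsum_list by simp
qed

lemma not_indep_collectionI:
  assumes "set xs \<subseteq> C" and "set_mset \<beta> \<subseteq> C" and "set_mset \<gamma> \<subseteq> C" and "\<beta> \<noteq> \<gamma>"
    and "rep_iso (dsum_list xs) (dsum_mset \<beta>)" and "rep_iso (dsum_list xs) (dsum_mset \<gamma>)"
  shows "\<not> indep_collection C"
  using assms unfolding indep_collection_def by blast

lemma not_thinI:
  assumes "a \<in> J" and "jle a a" and "nat_trans (P a) (P a) \<phi>"
    and "\<And>c. \<exists>v. \<phi> v \<noteq> c \<cdot>\<^sub>m Pmor a a v"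
  shows "\<not> thin J jle P Pmor"
  using assms unfolding thin_def by fastforce

lemma pair_rep_in_nonzero_cokers:
  fixes x y :: "'i::order"
  assumes "\<not> x \<le> y" and "\<not> y \<le> x"
  shows "pair_rep x y \<in> {A \<in> coker_collection. \<not> is_zero_rep A}"
  unfolding pair_rep_def using assms
  by (intro coker_rep_in_nonzero_cokers[where v = x])
    (auto simp: upset_Un upset_atLeast upset_greaterThan less_le)

lemma simple_rep_in_nonzero_cokers: "simple_rep (x::'i::order) \<in> {A \<in> coker_collection. \<not> is_zero_rep A}"
  unfolding simple_rep_def
  by (intro coker_rep_in_nonzero_cokers[where v = x]) (auto simp: upset_atLeast upset_greaterThan)

lemma not_indep_nonzero_cokers:
  fixes x y :: "'i::order"
  assumes "\<not> x \<le> y" and "\<not> y \<le> x"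
  shows "\<not> indep_collection {A \<in> (coker_collection :: ('i::order,'k::field) rep set). \<not> is_zero_rep A}"
proof (rule not_indep_collectionI)
  let ?C = "pair_rep x y :: ('i,'k) rep"
  show "rep_iso (dsum_list [?C]) (dsum_mset {#?C#})"
    using assms by (intro rep_iso_dsum_pair_rep) (auto simp: is_prerep_pair_rep)
  show "rep_iso (dsum_list [?C]) (dsum_mset {#simple_rep x, simple_rep y#})"
    using assms by (intro rep_iso_dsum_pair_rep)
      (auto simp: is_prerep_simple_rep rdim_pair_rep rdim_simple_rep)
  show "{#?C#} \<noteq> {#simple_rep x, simple_rep y#}"
    by (auto dest: arg_cong[where f = size])
qed (use assms pair_rep_in_nonzero_cokers simple_rep_in_nonzero_cokers in auto)

lemma not_thin_Q:
  fixes x y :: "'i::order"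
  assumes "\<not> x \<le> y" and "\<not> y \<le> x"
  shows "\<not> thin Omega Omega_le (Qobj :: _ \<Rightarrow> ('i::order,'k::field) rep) Qmor"
proof -
  define a where "a = ({x..} \<union> {y..}, {x<..} \<union> {y<..})"
  have Qa: "Qobj a = pair_rep x y"
    unfolding Qobj_def a_def pair_rep_def by simp
  define \<phi> :: "'i \<Rightarrow> 'k mat" where
    "\<phi> v = (if v = x then 1\<^sub>m else 0\<^sub>m (rdim (Qobj a :: ('i,'k) rep) v)) (rdim (Qobj a :: ('i,'k) rep) v)"
    for v
  show ?thesis
  proof (rule not_thinI)
    show "a \<in> Omega"
      unfolding a_def Omega_def by (auto simp: upset_Un upset_atLeast upset_greaterThan less_le)
    show "Omega_le a a"
      unfolding Omega_le_def by simp
    show "nat_trans (Qobj a) (Qobj a) \<phi>"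
      unfolding Qa \<phi>_def using antichain_support_pair_rep[OF assms]
      by (intro nat_trans_antichain_support) (auto simp: is_prerep_pair_rep)
    fix c :: 'k
    have "x \<noteq> y" using assms by auto
    then have "\<phi> x $$ (0, 0) \<noteq> \<phi> y $$ (0, 0)"
      unfolding \<phi>_def Qa rdim_pair_rep[OF assms] by simp
    moreover have "(c \<cdot>\<^sub>m Qmor a a v) $$ (0, 0) = c" if "v = x \<or> v = y" for v
      using that unfolding Qmor_def Qa rdim_pair_rep[OF assms] by auto
    ultimately show "\<exists>v. \<phi> v \<noteq> c \<cdot>\<^sub>m Qmor a a v"
      by metis
  qed
qed

theorem proposition6p4:
  fixes x y :: "'i::{finite,order}"
  assumes "\<not> x \<le> y" and "\<not> y \<le> x"
  shows "\<not> indep_collection {A \<in> (coker_collection :: ('i,'k::field) rep set). \<not> is_zero_rep A}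
       \<and> \<not> thin Omega Omega_le (Qobj :: _ \<Rightarrow> ('i,'k) rep) Qmor"
  using not_indep_nonzero_cokers[OF assms] not_thin_Q[OF assms] by blast

end
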